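(* Let $n\geqslant 0$ and let $W_n$ act on $\mathcal{C}^n$ via its left action on $W_n/W_{n-1}$. Then: (1) for each $k$, $W_n$ acts transitively on the set of $k$-simplices of $\mathcal{C}^n$; (2) for any $k$-simplex $C$ and any permutation $\phi$ of the vertices of $C$, there is an element of $W_n$ that maps $C$ to itself and acts on its vertices as $\phi$; (3) every simplex of $\mathcal{C}^n$ is a face of an $n$-simplex.
   Context: Standing setup: $\Gamma_1$ is an arbitrary finite Coxeter diagram with a preferred vertex $s_1$ (edge $\{s,t\}$ iff $m_{st}\geqslant3$; unlabelled edge means $m_{st}=3$, no edge means $m_{st}=2$). For $n\geqslant 2$, $\Gamma_n$ is obtained from $\Gamma_{n-1}$ by adding one new vertex $s_n$ joined by an unlabelled edge to $s_{n-1}$ and to no other vertex. $\Gamma_0$ is $\Gamma_1$ with $s_1$ deleted; $\Gamma_{-1}$ is $\Gamma_1$ with $s_1$ and all its neighbours deleted. For $n\geqslant -1$, $S_n$ is the vertex set of $\Gamma_n$ and $W_n$ the Coxeter group; $W_m$ ($m\leqslant n$) is the standard parabolic subgroup of $W_n$ generated by $S_m$. Definition of $\mathcal{C}^n$ ($n\geqslant 0$): the abstract simplicial complex with vertex set $W_n/W_{n-1}$ whose $k$-simplices ($0\leqslant k\leqslant n$) are the sets $\{c(s_{n-k+1}\cdots s_n)W_{n-1},\ \ldots,\ cs_nW_{n-1},\ cW_{n-1}\}$ for $c\in W_n$; such $c$ is called a lift of the simplex. *)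

theory Defs
  imports Main "HOL-Library.Extended_Nat" "HOL-Combinatorics.Permutations"
begin

text \<open>A Coxeter matrix is a function M :: 'v => 'v => enat (the value infinity
means no relation). The relators are the words (s t)^(M s t) for s, t in S with
M s t finite; since M s s = 1 this includes s s.\<close>

definition cox_relators :: "'v set \<Rightarrow> ('v \<Rightarrow> 'v \<Rightarrow> enat) \<Rightarrow> 'v list set" where
  "cox_relators S M = {concat (replicate (the_enat (M s t)) [s, t]) | s t.
      s \<in> S \<and> t \<in> S \<and> M s t \<noteq> \<infinity>}"

text \<open>Elements of the
group are the equivalence classes of words; product is concatenation.\<close>

inductive_set cox_eq :: "'v set \<Rightarrow> ('v \<Rightarrow> 'v \<Rightarrow> enat) \<Rightarrow> ('v list \<times> 'v list) set"
  for S M where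
  refl: "w \<in> lists S \<Longrightarrow> (w, w) \<in> cox_eq S M"
| sym: "(u, v) \<in> cox_eq S M \<Longrightarrow> (v, u) \<in> cox_eq S M"
| trans: "(u, v) \<in> cox_eq S M \<Longrightarrow> (v, w) \<in> cox_eq S M \<Longrightarrow> (u, w) \<in> cox_eq S M"
| rel: "u \<in> lists S \<Longrightarrow> v \<in> lists S \<Longrightarrow> r \<in> cox_relators S M \<Longrightarrow>
        (u @ r @ v, u @ v) \<in> cox_eq S M"

text \<open>Vertices of Gamma_1 have type 'a; the new vertices s_k (k >= 2) are Inr k;
s_1 is Inl s1.\<close>

definition gen :: "'a \<Rightarrow> nat \<Rightarrow> 'a + nat" where
  "gen s1 k = (if k = 1 then Inl s1 else Inr k)"

fun cox_mat :: "'a \<Rightarrow> ('a \<Rightarrow> 'a \<Rightarrow> enat) \<Rightarrow> 'a + nat \<Rightarrow> 'a + nat \<Rightarrow> enat" where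
  "cox_mat s1 m1 (Inl a) (Inl b) = m1 a b"
| "cox_mat s1 m1 (Inr i) (Inr j) =
     (if i = j then 1 else if i = Suc j \<or> j = Suc i then 3 else 2)"
| "cox_mat s1 m1 (Inl a) (Inr j) = (if j = 2 \<and> a = s1 then 3 else 2)"
| "cox_mat s1 m1 (Inr j) (Inl a) = (if j = 2 \<and> a = s1 then 3 else 2)"

definition gens :: "'a set \<Rightarrow> 'a \<Rightarrow> ('a \<Rightarrow> 'a \<Rightarrow> enat) \<Rightarrow> int \<Rightarrow> ('a + nat) set" where
  "gens V1 s1 m1 n =
     (if n \<ge> 1 then Inl ` V1 \<union> Inr ` {2..nat n}
      else if n = 0 then Inl ` (V1 - {s1})
      else Inl ` {v \<in> V1. v \<noteq> s1 \<and> \<not> (m1 s1 v \<ge> 3)})"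

definition Weq :: "'a set \<Rightarrow> 'a \<Rightarrow> ('a \<Rightarrow> 'a \<Rightarrow> enat) \<Rightarrow> nat \<Rightarrow> (('a + nat) list \<times> ('a + nat) list) set" where
  "Weq V1 s1 m1 n = cox_eq (gens V1 s1 m1 (int n)) (cox_mat s1 m1)"

text \<open>The left coset c W_{n-1} in W_n, represented as the set of all words over S_n
representing an element of it.\<close>

definition coset :: "'a set \<Rightarrow> 'a \<Rightarrow> ('a \<Rightarrow> 'a \<Rightarrow> enat) \<Rightarrow> nat \<Rightarrow> ('a + nat) list \<Rightarrow> ('a + nat) list set" where
  "coset V1 s1 m1 n c = {w. \<exists>h \<in> lists (gens V1 s1 m1 (int n - 1)). (w, c @ h) \<in> Weq V1 s1 m1 n}"

text \<open>The k-simplex with lift c: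
  { c (s_{n-k+1} ... s_n) W_{n-1}, ..., c s_n W_{n-1}, c W_{n-1} }.\<close>

definition simplex_of :: "'a set \<Rightarrow> 'a \<Rightarrow> ('a \<Rightarrow> 'a \<Rightarrow> enat) \<Rightarrow> nat \<Rightarrow> nat \<Rightarrow> ('a + nat) list \<Rightarrow> ('a + nat) list set set" where
  "simplex_of V1 s1 m1 n k c =
     {coset V1 s1 m1 n (c @ map (gen s1) [n - j + 1 ..< n + 1]) | j. j \<le> k}"

definition simplices :: "'a set \<Rightarrow> 'a \<Rightarrow> ('a \<Rightarrow> 'a \<Rightarrow> enat) \<Rightarrow> nat \<Rightarrow> nat \<Rightarrow> ('a + nat) list set set set" where
  "simplices V1 s1 m1 n k =
     (if k \<le> n then {simplex_of V1 s1 m1 n k c | c. c \<in> lists (gens V1 s1 m1 (int n))} else {})"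

definition act :: "'a set \<Rightarrow> 'a \<Rightarrow> ('a \<Rightarrow> 'a \<Rightarrow> enat) \<Rightarrow> nat \<Rightarrow> ('a + nat) list \<Rightarrow> ('a + nat) list set \<Rightarrow> ('a + nat) list set" where
  "act V1 s1 m1 n g X = {w. \<exists>x \<in> X. (w, g @ x) \<in> Weq V1 s1 m1 n}"

end

theory Submission
  imports Defs
begin

text \<open>W_n acts on its cosets by left multiplication, so the element d c^-1 carries the simplex with
  lift c to the one with lift d, and every simplex is a face of the n-simplex with the same lift.
  For the vertex permutations it suffices to realise the transpositions of neighbouring vertices
  c (s_(n-l+1) ... s_n) W_(n-1), l = i, i+1: the element c s_(n-i) c^-1 does this, because the
  Coxeter relations along the tail s_1 - s_2 - ... - s_n give s_(n-i) s_(n-l+1) ... s_n =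
  s_(n-l'+1) ... s_n h with h in W_(n-1), where l' is l with i and i+1 exchanged.  Arbitrary
  transpositions, and then all permutations, are products of these.\<close>

section \<open>Words in Coxeter groups\<close>

lemma cox_relators_in_lists: "r \<in> cox_relators S M \<Longrightarrow> r \<in> lists S"
  unfolding cox_relators_def by (auto split: if_splits)

lemma cox_eq_in_lists: "(u, v) \<in> cox_eq S M \<Longrightarrow> u \<in> lists S \<and> v \<in> lists S"
  by (induction rule: cox_eq.induct) (auto dest: cox_relators_in_lists)

lemma cox_eq_append_left:
  "(u, v) \<in> cox_eq S M \<Longrightarrow> g \<in> lists S \<Longrightarrow> (g @ u, g @ v) \<in> cox_eq S M"
proof (induction rule: cox_eq.induct)
  case (rel u v r)
  then show ?case using cox_eq.rel[of "g @ u" S v r M] by simp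
qed (auto intro: cox_eq.sym cox_eq.trans intro!: cox_eq.refl)

lemma cox_eq_append_right:
  "(u, v) \<in> cox_eq S M \<Longrightarrow> g \<in> lists S \<Longrightarrow> (u @ g, v @ g) \<in> cox_eq S M"
proof (induction rule: cox_eq.induct)
  case (rel u v r)
  then show ?case using cox_eq.rel[of u S "v @ g" r M] by simp
qed (auto intro: cox_eq.sym cox_eq.trans intro!: cox_eq.refl)

lemma cox_relator_power:
  "a \<in> S \<Longrightarrow> b \<in> S \<Longrightarrow> M a b = enat m \<Longrightarrow> concat (replicate m [a, b]) \<in> cox_relators S M"
  unfolding cox_relators_def by (intro CollectI exI[of _ a] exI[of _ b]) simp

lemma cox_eq_cancel_square:
  assumes "a \<in> S" "M a a = 1" "u \<in> lists S" "v \<in> lists S"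
  shows "(u @ a # a # v, u @ v) \<in> cox_eq S M"
  using cox_eq.rel[OF assms(3,4) cox_relator_power[of a S a M 1]] assms(1,2)
  by (simp add: one_enat_def)

lemma cox_eq_rev_append_cancel:
  assumes "\<forall>a\<in>S. M a a = 1"
  shows "w \<in> lists S \<Longrightarrow> (rev w @ w, []) \<in> cox_eq S M"
proof (induction w)
  case Nil
  then show ?case by (simp add: cox_eq.refl)
next
  case (Cons a w)
  then have "(rev w @ a # a # w, rev w @ w) \<in> cox_eq S M"
    using assms by (intro cox_eq_cancel_square) auto
  with Cons show ?case by (auto intro: cox_eq.trans)
qed

lemma cox_eq_append_rev_cancel:
  "\<forall>a\<in>S. M a a = 1 \<Longrightarrow> w \<in> lists S \<Longrightarrow> (w @ rev w, []) \<in> cox_eq S M"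
  using cox_eq_rev_append_cancel[of S M "rev w"] by (simp add: in_lists_conv_set)

lemma cox_eq_commute:
  assumes "a \<in> S" "b \<in> S" "M a b = 2" "M a a = 1" "M b b = 1"
  shows "([a, b], [b, a]) \<in> cox_eq S M"
proof -
  have "[a, b, a, b] \<in> cox_relators S M"
    using cox_relator_power[of a S b M 2] assms by (simp add: numeral_eq_enat eval_nat_numeral)
  then have "([b, a] @ [a, b, a, b] @ [], [b, a] @ []) \<in> cox_eq S M"
    using assms by (intro cox_eq.rel) auto
  moreover have "([b] @ a # a # [b, a, b], [b] @ [b, a, b]) \<in> cox_eq S M"
    using assms by (intro cox_eq_cancel_square) auto
  moreover have "([] @ b # b # [a, b], [] @ [a, b]) \<in> cox_eq S M"
    using assms by (intro cox_eq_cancel_square) auto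
  ultimately show ?thesis by simp (meson cox_eq.sym cox_eq.trans)
qed

lemma cox_eq_braid:
  assumes "a \<in> S" "b \<in> S" "M a b = 3" "M a a = 1" "M b b = 1"
  shows "([a, b, a], [b, a, b]) \<in> cox_eq S M"
proof -
  have "[a, b, a, b, a, b] \<in> cox_relators S M"
    using cox_relator_power[of a S b M 3] assms by (simp add: numeral_eq_enat eval_nat_numeral)
  then have "([] @ [a, b, a, b, a, b] @ [b, a, b], [] @ [b, a, b]) \<in> cox_eq S M"
    using assms by (intro cox_eq.rel) auto
  moreover have "([a, b, a, b, a] @ b # b # [a, b], [a, b, a, b, a] @ [a, b]) \<in> cox_eq S M"
    using assms by (intro cox_eq_cancel_square) auto
  moreover have "([a, b, a, b] @ a # a # [b], [a, b, a, b] @ [b]) \<in> cox_eq S M"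
    using assms by (intro cox_eq_cancel_square) auto
  moreover have "([a, b, a] @ b # b # [], [a, b, a] @ []) \<in> cox_eq S M"
    using assms by (intro cox_eq_cancel_square) auto
  ultimately show ?thesis by simp (meson cox_eq.sym cox_eq.trans)
qed

lemma cox_eq_commute_list:
  assumes "\<forall>x\<in>S. M x x = 1" "a \<in> S"
  shows "xs \<in> lists S \<Longrightarrow> \<forall>x\<in>set xs. M a x = 2 \<Longrightarrow> (a # xs, xs @ [a]) \<in> cox_eq S M"
proof (induction xs)
  case Nil
  then show ?case using assms by (auto intro: cox_eq.refl)
next
  case (Cons x xs)
  have "([a, x] @ xs, [x, a] @ xs) \<in> cox_eq S M"
    using Cons assms by (intro cox_eq_append_right cox_eq_commute) auto
  moreover have "([x] @ (a # xs), [x] @ (xs @ [a])) \<in> cox_eq S M"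
    using Cons by (intro cox_eq_append_left) auto
  ultimately show ?case by simp (meson cox_eq.trans)
qed

lemma cox_eq_braid_shift:
  assumes "\<forall>x\<in>S. M x x = 1" and S: "a \<in> S" "b \<in> S" "A \<in> lists S" "B \<in> lists S"
    and "M a b = 3" "\<forall>x\<in>set A. M b x = 2" "\<forall>x\<in>set B. M a x = 2"
  shows "(b # A @ a # b # B, A @ a # b # B @ [a]) \<in> cox_eq S M"
proof -
  have "(b # A, A @ [b]) \<in> cox_eq S M"
    using assms by (intro cox_eq_commute_list) auto
  then have 1: "((b # A) @ a # b # B, (A @ [b]) @ a # b # B) \<in> cox_eq S M"
    using S by (intro cox_eq_append_right) auto
  have "([b, a, b], [a, b, a]) \<in> cox_eq S M"
    using assms by (intro cox_eq.sym[OF cox_eq_braid]) auto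
  then have 2: "(A @ [b, a, b] @ B, A @ [a, b, a] @ B) \<in> cox_eq S M"
    using S by (intro cox_eq_append_left cox_eq_append_right) auto
  have "(a # B, B @ [a]) \<in> cox_eq S M"
    using assms by (intro cox_eq_commute_list) auto
  then have 3: "((A @ [a, b]) @ a # B, (A @ [a, b]) @ B @ [a]) \<in> cox_eq S M"
    using S by (intro cox_eq_append_left) auto
  from 1 2 3 show ?thesis by simp (meson cox_eq.trans)
qed

section \<open>The complex C^n\<close>

context
  fixes V1 :: "'a set" and s1 :: 'a and m1 :: "'a \<Rightarrow> 'a \<Rightarrow> enat" and n :: nat
  assumes s1_in_V1: "s1 \<in> V1" and m1_diag: "\<forall>a\<in>V1. m1 a a = 1"
begin

abbreviation "S\<^sub>n \<equiv> gens V1 s1 m1 (int n)"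
abbreviation "S\<^sub>p\<^sub>r\<^sub>e\<^sub>v \<equiv> gens V1 s1 m1 (int n - 1)"
abbreviation "M\<^sub>n \<equiv> cox_mat s1 m1"

abbreviation Weq_n :: "('a + nat) list \<Rightarrow> ('a + nat) list \<Rightarrow> bool" (infix "\<simeq>" 50)
  where "u \<simeq> v \<equiv> (u, v) \<in> Weq V1 s1 m1 n"

lemma Weq_n_eq: "Weq V1 s1 m1 n = cox_eq S\<^sub>n M\<^sub>n"
  by (simp add: Weq_def)

lemma Weq_n_trans: "u \<simeq> v \<Longrightarrow> v \<simeq> w \<Longrightarrow> u \<simeq> w"
  unfolding Weq_n_eq by (rule cox_eq.trans)

lemma cox_mat_diag: "\<forall>x\<in>S\<^sub>n. M\<^sub>n x x = 1"
  using m1_diag unfolding gens_def by (auto split: if_splits)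

lemma gens_prev_subset: "S\<^sub>p\<^sub>r\<^sub>e\<^sub>v \<subseteq> S\<^sub>n"
  unfolding gens_def by auto

lemma gen_in_gens: "1 \<le> p \<Longrightarrow> p \<le> n \<Longrightarrow> gen s1 p \<in> S\<^sub>n"
  using s1_in_V1 unfolding gens_def gen_def by auto

lemma gen_in_gens_prev: "1 \<le> p \<Longrightarrow> p < n \<Longrightarrow> gen s1 p \<in> S\<^sub>p\<^sub>r\<^sub>e\<^sub>v"
  using s1_in_V1 unfolding gens_def gen_def by auto

lemma cox_mat_gen_distant:
  "1 \<le> p \<Longrightarrow> p + 2 \<le> q \<Longrightarrow> M\<^sub>n (gen s1 p) (gen s1 q) = 2 \<and> M\<^sub>n (gen s1 q) (gen s1 p) = 2"
  unfolding gen_def by auto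

lemma cox_mat_gen_adjacent: "1 \<le> p \<Longrightarrow> M\<^sub>n (gen s1 p) (gen s1 (Suc p)) = 3"
  unfolding gen_def by auto

definition tail_word :: "nat \<Rightarrow> ('a + nat) list" where
  "tail_word l = map (gen s1) [n - l + 1..<n + 1]"

lemma tail_word_in_lists: "l \<le> n \<Longrightarrow> tail_word l \<in> lists S\<^sub>n"
  unfolding tail_word_def using gen_in_gens by auto

lemma tail_word_split:
  assumes "j \<le> l" "l \<le> n"
  shows "tail_word l = map (gen s1) [n - l + 1..<n - j + 1] @ tail_word j"
proof -
  have "[n - l + 1..<n + 1] = [n - l + 1..<n - j + 1] @ [n - j + 1..<n + 1]"
    using upt_add_eq_append[of "n - l + 1" "n - j + 1" j] assms by simp
  then show ?thesis unfolding tail_word_def by simp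
qed

lemma tail_word_Suc: "i < n \<Longrightarrow> tail_word (Suc i) = gen s1 (n - i) # tail_word i"
proof -
  have "[n - Suc i + 1..<n + 1] = (n - i) # [n - i + 1..<n + 1]" if "i < n"
    using that upt_conv_Cons[of "n - i" "n + 1"] by (simp add: Suc_diff_Suc)
  then show "i < n \<Longrightarrow> ?thesis" unfolding tail_word_def by simp
qed

text \<open>For l > i+1 this is the braid relation between s_(n-i-1) and s_(n-i); for l < i the generator
  commutes with the whole word.\<close>

lemma gen_tail_word:
  assumes "i < n" "l \<le> n"
  shows "\<exists>h \<in> lists S\<^sub>p\<^sub>r\<^sub>e\<^sub>v. gen s1 (n - i) # tail_word l \<simeq> tail_word (transpose i (Suc i) l) @ h"
proof -
  define m where "m = n - i"
  have m: "1 \<le> m" "m \<le> n" "gen s1 m \<in> S\<^sub>n"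
    using assms gen_in_gens unfolding m_def by auto
  consider "l = i" | "l = Suc i" | "l < i" | "Suc i < l" by linarith
  then show ?thesis
  proof cases
    case 1
    then have "gen s1 m # tail_word l \<simeq> tail_word (Suc i) @ []"
      using assms tail_word_in_lists[of "Suc i"] unfolding Weq_n_eq m_def
      by (auto simp: tail_word_Suc intro!: cox_eq.refl)
    with 1 show ?thesis unfolding m_def by (intro bexI[of _ "[]"]) simp_all
  next
    case 2
    then have "[] @ gen s1 m # gen s1 m # tail_word i \<simeq> [] @ tail_word i"
      using assms m cox_mat_diag tail_word_in_lists[of i] unfolding Weq_n_eq
      by (intro cox_eq_cancel_square) auto
    with 2 assms show ?thesis unfolding m_def by (auto simp: tail_word_Suc intro!: bexI[of _ "[]"])
  next
    case 3
    have "\<forall>x\<in>set (tail_word l). M\<^sub>n (gen s1 m) x = 2"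
      using 3 m cox_mat_gen_distant unfolding tail_word_def m_def by auto
    then have "gen s1 m # tail_word l \<simeq> tail_word l @ [gen s1 m]"
      using 3 assms m cox_mat_diag tail_word_in_lists[of l] unfolding Weq_n_eq
      by (intro cox_eq_commute_list) auto
    moreover have "gen s1 m \<in> S\<^sub>p\<^sub>r\<^sub>e\<^sub>v"
      using 3 m gen_in_gens_prev unfolding m_def by auto
    ultimately show ?thesis using 3 unfolding m_def by auto
  next
    case 4
    define A where "A = map (gen s1) [n - l + 1..<m - 1]"
    have m2: "2 \<le> m" using 4 assms unfolding m_def by auto
    have split: "tail_word l = A @ gen s1 (m - 1) # gen s1 m # tail_word i"
      using tail_word_split[of "Suc (Suc i)" l] 4 assms m2
      by (simp add: tail_word_Suc A_def m_def Suc_diff_Suc numeral_2_eq_2)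
    have "gen s1 m # A @ gen s1 (m - 1) # gen s1 m # tail_word i
          \<simeq> A @ gen s1 (m - 1) # gen s1 m # tail_word i @ [gen s1 (m - 1)]"
      unfolding Weq_n_eq
    proof (rule cox_eq_braid_shift[where S = "S\<^sub>n" and M = "M\<^sub>n", OF cox_mat_diag])
      show "M\<^sub>n (gen s1 (m - 1)) (gen s1 m) = 3"
        using cox_mat_gen_adjacent[of "m - 1"] m2 by simp
      show "\<forall>x\<in>set A. M\<^sub>n (gen s1 m) x = 2"
        using cox_mat_gen_distant m2 unfolding A_def by auto
      show "\<forall>x\<in>set (tail_word i). M\<^sub>n (gen s1 (m - 1)) x = 2"
        using cox_mat_gen_distant m2 unfolding tail_word_def m_def by auto
    qed (use m m2 gen_in_gens tail_word_in_lists assms in \<open>auto simp: A_def\<close>)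
    moreover have "gen s1 (m - 1) \<in> S\<^sub>p\<^sub>r\<^sub>e\<^sub>v"
      using m m2 gen_in_gens_prev by auto
    ultimately show ?thesis using 4 split unfolding m_def by auto
  qed
qed

lemma coset_subset:
  assumes "c \<simeq> d @ h" "h \<in> lists S\<^sub>p\<^sub>r\<^sub>e\<^sub>v"
  shows "coset V1 s1 m1 n c \<subseteq> coset V1 s1 m1 n d"
proof
  fix w assume "w \<in> coset V1 s1 m1 n c"
  then obtain h' where h': "h' \<in> lists S\<^sub>p\<^sub>r\<^sub>e\<^sub>v" "w \<simeq> c @ h'"
    unfolding coset_def by auto
  have "c @ h' \<simeq> d @ h @ h'"
    using assms(1) h'(1) gens_prev_subset unfolding Weq_n_eq
    by (metis append_assoc cox_eq_append_right lists_mono subsetD)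
  with h' have "w \<simeq> d @ (h @ h')" by (auto intro: Weq_n_trans)
  with h'(1) assms(2) show "w \<in> coset V1 s1 m1 n d"
    unfolding coset_def by (intro CollectI bexI[of _ "h @ h'"]) auto
qed

lemma coset_eqI:
  assumes "c \<simeq> d @ h" "h \<in> lists S\<^sub>p\<^sub>r\<^sub>e\<^sub>v"
  shows "coset V1 s1 m1 n c = coset V1 s1 m1 n d"
proof
  show "coset V1 s1 m1 n c \<subseteq> coset V1 s1 m1 n d" using assms by (rule coset_subset)
  have hS: "h \<in> lists S\<^sub>n" and dS: "d \<in> lists S\<^sub>n"
    using assms gens_prev_subset cox_eq_in_lists[of c "d @ h"] unfolding Weq_n_eq by auto
  have "d @ h @ rev h \<simeq> d @ []"
    using cox_eq_append_rev_cancel[of "S\<^sub>n" "M\<^sub>n", OF cox_mat_diag hS] dS unfolding Weq_n_eq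
    by (rule cox_eq_append_left)
  moreover have "c @ rev h \<simeq> d @ h @ rev h"
    using assms(1) hS unfolding Weq_n_eq
    by (metis append_assoc cox_eq_append_right in_lists_conv_set set_rev)
  ultimately have "d \<simeq> c @ rev h" unfolding Weq_n_eq by (auto intro: cox_eq.sym cox_eq.trans)
  then show "coset V1 s1 m1 n d \<subseteq> coset V1 s1 m1 n c"
    using assms(2) by (intro coset_subset[of d c "rev h"]) (auto simp: in_lists_conv_set)
qed

lemma coset_cong: "c \<simeq> d \<Longrightarrow> coset V1 s1 m1 n c = coset V1 s1 m1 n d"
  using coset_eqI[of c d "[]"] by simp

lemma act_coset:
  assumes "g \<in> lists S\<^sub>n" "c \<in> lists S\<^sub>n"
  shows "act V1 s1 m1 n g (coset V1 s1 m1 n c) = coset V1 s1 m1 n (g @ c)"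
proof (intro set_eqI iffI)
  fix w assume "w \<in> act V1 s1 m1 n g (coset V1 s1 m1 n c)"
  then obtain x h where x: "w \<simeq> g @ x" "h \<in> lists S\<^sub>p\<^sub>r\<^sub>e\<^sub>v" "x \<simeq> c @ h"
    unfolding act_def coset_def by auto
  have "g @ x \<simeq> (g @ c) @ h"
    using x(3) assms(1) unfolding Weq_n_eq by (metis append_assoc cox_eq_append_left)
  with x show "w \<in> coset V1 s1 m1 n (g @ c)"
    unfolding coset_def by (blast intro: Weq_n_trans)
next
  fix w assume "w \<in> coset V1 s1 m1 n (g @ c)"
  then obtain h where h: "h \<in> lists S\<^sub>p\<^sub>r\<^sub>e\<^sub>v" "w \<simeq> g @ c @ h"
    unfolding coset_def by auto
  have "c @ h \<in> coset V1 s1 m1 n c"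
    unfolding coset_def Weq_n_eq using h(1) assms gens_prev_subset
    by (auto intro!: bexI[of _ h] cox_eq.refl)
  with h show "w \<in> act V1 s1 m1 n g (coset V1 s1 m1 n c)"
    unfolding act_def by auto
qed

definition vertex :: "('a + nat) list \<Rightarrow> nat \<Rightarrow> ('a + nat) list set" where
  "vertex c l = coset V1 s1 m1 n (c @ tail_word l)"

lemma simplex_of_eq_vertices: "simplex_of V1 s1 m1 n k c = vertex c ` {..k}"
  unfolding simplex_of_def vertex_def tail_word_def by blast

lemma simplicesE:
  assumes "C \<in> simplices V1 s1 m1 n k"
  obtains c where "k \<le> n" "c \<in> lists S\<^sub>n" "C = vertex c ` {..k}"
  using assms unfolding simplices_def simplex_of_eq_vertices by (auto split: if_splits)

lemma act_vertex:
  "g \<in> lists S\<^sub>n \<Longrightarrow> c \<in> lists S\<^sub>n \<Longrightarrow> l \<le> n \<Longrightarrow>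
    act V1 s1 m1 n g (vertex c l) = coset V1 s1 m1 n (g @ c @ tail_word l)"
  unfolding vertex_def using tail_word_in_lists by (simp add: act_coset)

lemma act_Nil_vertex: "c \<in> lists S\<^sub>n \<Longrightarrow> l \<le> n \<Longrightarrow> act V1 s1 m1 n [] (vertex c l) = vertex c l"
  using act_vertex[of "[]" c l] by (simp add: vertex_def)

lemma act_append_vertex:
  "g \<in> lists S\<^sub>n \<Longrightarrow> g' \<in> lists S\<^sub>n \<Longrightarrow> c \<in> lists S\<^sub>n \<Longrightarrow> l \<le> n \<Longrightarrow>
    act V1 s1 m1 n (g @ g') (vertex c l) = act V1 s1 m1 n g (act V1 s1 m1 n g' (vertex c l))"
  using tail_word_in_lists by (simp add: act_vertex act_coset)

lemma act_change_lift:
  assumes "c \<in> lists S\<^sub>n" "d \<in> lists S\<^sub>n" "l \<le> n"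
  shows "act V1 s1 m1 n (d @ rev c) (vertex c l) = vertex d l"
proof -
  have "(rev c @ c) @ tail_word l \<simeq> [] @ tail_word l"
    using assms cox_mat_diag tail_word_in_lists unfolding Weq_n_eq
    by (intro cox_eq_append_right cox_eq_rev_append_cancel) auto
  then have "d @ (rev c @ c) @ tail_word l \<simeq> d @ [] @ tail_word l"
    using assms unfolding Weq_n_eq by (intro cox_eq_append_left) auto
  then have "coset V1 s1 m1 n ((d @ rev c) @ c @ tail_word l) = vertex d l"
    unfolding vertex_def by (intro coset_cong) simp
  moreover have "d @ rev c \<in> lists S\<^sub>n" using assms by (auto simp: in_lists_conv_set)
  ultimately show ?thesis using assms by (simp add: act_vertex)
qed

definition realizable :: "('a + nat) list \<Rightarrow> nat \<Rightarrow> (nat \<Rightarrow> nat) \<Rightarrow> bool" where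
  "realizable c k \<sigma> \<longleftrightarrow>
     (\<exists>g \<in> lists S\<^sub>n. \<forall>l\<le>k. act V1 s1 m1 n g (vertex c l) = vertex c (\<sigma> l))"

lemma realizable_comp:
  assumes "c \<in> lists S\<^sub>n" "k \<le> n" "realizable c k \<sigma>" "realizable c k \<tau>" "\<forall>l\<le>k. \<tau> l \<le> k"
  shows "realizable c k (\<sigma> \<circ> \<tau>)"
proof -
  obtain g where g: "g \<in> lists S\<^sub>n" "\<forall>l\<le>k. act V1 s1 m1 n g (vertex c l) = vertex c (\<sigma> l)"
    using assms(3) unfolding realizable_def by blast
  obtain g' where g': "g' \<in> lists S\<^sub>n" "\<forall>l\<le>k. act V1 s1 m1 n g' (vertex c l) = vertex c (\<tau> l)"
    using assms(4) unfolding realizable_def by blast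
  have "act V1 s1 m1 n (g @ g') (vertex c l) = vertex c ((\<sigma> \<circ> \<tau>) l)" if "l \<le> k" for l
    using g g' assms that by (simp add: act_append_vertex)
  moreover have "g @ g' \<in> lists S\<^sub>n" using g g' by simp
  ultimately show ?thesis unfolding realizable_def by blast
qed

lemma realizable_adjacent_transposition:
  assumes c: "c \<in> lists S\<^sub>n" and "i < k" "k \<le> n"
  shows "realizable c k (transpose i (Suc i))"
proof -
  define s where "s = gen s1 (n - i)"
  have s: "s \<in> S\<^sub>n" using gen_in_gens assms unfolding s_def by auto
  define g where "g = c @ s # rev c"
  have g: "g \<in> lists S\<^sub>n" using c s unfolding g_def by (auto simp: in_lists_conv_set)
  have "act V1 s1 m1 n g (vertex c l) = vertex c (transpose i (Suc i) l)" if l: "l \<le> k" for l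
  proof -
    obtain h where h: "h \<in> lists S\<^sub>p\<^sub>r\<^sub>e\<^sub>v" "s # tail_word l \<simeq> tail_word (transpose i (Suc i) l) @ h"
      using gen_tail_word[of i l] assms l unfolding s_def by auto
    have shift: "c @ s # tail_word l \<simeq> (c @ tail_word (transpose i (Suc i) l)) @ h"
      using cox_eq_append_left[OF h(2)[unfolded Weq_n_eq] c] unfolding Weq_n_eq by simp
    have "(c @ [s]) @ (rev c @ c) @ tail_word l \<simeq> (c @ [s]) @ [] @ tail_word l"
      using assms s l cox_mat_diag tail_word_in_lists unfolding Weq_n_eq
      by (intro cox_eq_append_left cox_eq_append_right cox_eq_rev_append_cancel) auto
    then have "act V1 s1 m1 n g (vertex c l) = coset V1 s1 m1 n (c @ s # tail_word l)"
      using assms g l by (simp add: act_vertex g_def coset_cong)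
    also have "\<dots> = vertex c (transpose i (Suc i) l)"
      unfolding vertex_def using shift h(1) by (rule coset_eqI)
    finally show ?thesis .
  qed
  with g show ?thesis unfolding realizable_def by blast
qed

lemma realizable_transposition_add:
  assumes "c \<in> lists S\<^sub>n" "k \<le> n"
  shows "i + Suc d \<le> k \<Longrightarrow> realizable c k (transpose i (i + Suc d))"
proof (induction d arbitrary: i)
  case 0
  then show ?case using realizable_adjacent_transposition[OF assms(1) _ assms(2), of i] by simp
next
  case (Suc d)
  have adj: "realizable c k (transpose i (Suc i))"
    using realizable_adjacent_transposition[OF assms(1) _ assms(2), of i] Suc.prems by simp
  have in_range: "\<forall>l\<le>k. transpose a b l \<le> k" if "a \<le> k" "b \<le> k" for a b
    using that by (simp add: transpose_def)
  have "realizable c k (transpose (Suc i) (Suc i + Suc d))"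
    using Suc.IH[of "Suc i"] Suc.prems by simp
  then have "realizable c k (transpose i (Suc i) \<circ> transpose (Suc i) (Suc i + Suc d) \<circ> transpose i (Suc i))"
    using Suc.prems adj assms in_range by (intro realizable_comp) auto
  moreover have "transpose i (Suc i) \<circ> transpose (Suc i) (Suc i + Suc d) \<circ> transpose i (Suc i)
      = transpose i (i + Suc (Suc d))"
    using transpose_comp_triple[of i "i + Suc (Suc d)" "Suc i"] by simp
  ultimately show ?case by simp
qed

lemma realizable_transposition:
  assumes "c \<in> lists S\<^sub>n" "k \<le> n" "i \<le> k" "j \<le> k"
  shows "realizable c k (transpose i j)"
proof -
  consider "i = j" | "i < j" | "j < i" by linarith
  then show ?thesis
  proof cases
    case 1
    then show ?thesis
      using assms act_Nil_vertex unfolding realizable_def by (intro bexI[of _ "[]"]) auto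
  next
    case 2
    then obtain d where "j = i + Suc d" using less_imp_Suc_add by auto
    then show ?thesis using realizable_transposition_add assms by simp
  next
    case 3
    then obtain d where "i = j + Suc d" using less_imp_Suc_add by auto
    then show ?thesis using realizable_transposition_add[of c k j d] assms
      by (simp add: transpose_commute)
  qed
qed

text \<open>No injectivity of l \<mapsto> vertex c l is needed: the induced map on vertices is well defined
  because act g is a function of the vertex.\<close>

lemma simplex_transposition_realizable:
  assumes c: "c \<in> lists S\<^sub>n" "k \<le> n" and a: "a \<in> vertex c ` {..k}" and b: "b \<in> vertex c ` {..k}"
  shows "\<exists>g \<in> lists S\<^sub>n. \<forall>v \<in> vertex c ` {..k}. act V1 s1 m1 n g v = transpose a b v"
proof -
  obtain i j where ij: "i \<le> k" "j \<le> k" "a = vertex c i" "b = vertex c j" using a b by auto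
  obtain g where g: "g \<in> lists S\<^sub>n"
    and g_act: "\<forall>l\<le>k. act V1 s1 m1 n g (vertex c l) = vertex c (transpose i j l)"
    using realizable_transposition[OF c ij(1,2)] unfolding realizable_def by blast
  have "act V1 s1 m1 n g (vertex c l) = transpose a b (vertex c l)" if l: "l \<le> k" for l
  proof -
    have ga: "act V1 s1 m1 n g a = b" and gb: "act V1 s1 m1 n g b = a"
      using g_act ij by auto
    consider "vertex c l = a" | "vertex c l = b" | "vertex c l \<noteq> a" "vertex c l \<noteq> b" by blast
    then show ?thesis
    proof cases
      case 3
      then have "l \<noteq> i" "l \<noteq> j" using ij by auto
      with 3 show ?thesis using g_act l by simp
    qed (use ga gb in auto)
  qed
  with g show ?thesis by blast
qed

lemma simplex_permutation_realizable:
  assumes c: "c \<in> lists S\<^sub>n" "k \<le> n" and \<phi>: "\<phi> permutes vertex c ` {..k}"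
  shows "\<exists>g \<in> lists S\<^sub>n. \<forall>v \<in> vertex c ` {..k}. act V1 s1 m1 n g v = \<phi> v"
  using \<phi> finite_imageI[OF finite_atMost]
proof (induction \<phi> rule: permutes_induct)
  case id
  then show ?case using c act_Nil_vertex by (intro bexI[of _ "[]"]) auto
next
  case (swap a b p)
  obtain g where g: "g \<in> lists S\<^sub>n"
    and g_act: "\<forall>v \<in> vertex c ` {..k}. act V1 s1 m1 n g v = transpose a b v"
    using simplex_transposition_realizable[OF c swap(1,2)] by blast
  obtain g' where g': "g' \<in> lists S\<^sub>n"
    and g'_act: "\<forall>v \<in> vertex c ` {..k}. act V1 s1 m1 n g' v = p v"
    using swap.IH by blast
  have "act V1 s1 m1 n (g @ g') v = (transpose a b \<circ> p) v" if v: "v \<in> vertex c ` {..k}" for v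
  proof -
    obtain l where l: "l \<le> k" "v = vertex c l" using v by auto
    have "act V1 s1 m1 n (g @ g') v = act V1 s1 m1 n g (p v)"
      using l g g' g'_act c v by (simp add: act_append_vertex)
    also have "\<dots> = transpose a b (p v)"
      using swap.hyps(4) v by (intro g_act[rule_format]) (simp add: permutes_in_image)
    finally show ?thesis by simp
  qed
  moreover have "g @ g' \<in> lists S\<^sub>n" using g g' by simp
  ultimately show ?case by blast
qed

lemma simplices_transitive:
  assumes "C \<in> simplices V1 s1 m1 n k" "D \<in> simplices V1 s1 m1 n k"
  shows "\<exists>g \<in> lists S\<^sub>n. act V1 s1 m1 n g ` C = D"
proof -
  obtain c where c: "k \<le> n" "c \<in> lists S\<^sub>n" "C = vertex c ` {..k}" using assms(1) by (rule simplicesE)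
  obtain d where d: "d \<in> lists S\<^sub>n" "D = vertex d ` {..k}" using assms(2) by (rule simplicesE)
  have "act V1 s1 m1 n (d @ rev c) ` C = D"
    unfolding c(3) d(2) image_image using act_change_lift c d by (intro image_cong) auto
  moreover have "d @ rev c \<in> lists S\<^sub>n" using c d by (auto simp: in_lists_conv_set)
  ultimately show ?thesis by blast
qed

lemma simplices_permutation:
  assumes "C \<in> simplices V1 s1 m1 n k" "\<phi> permutes C"
  shows "\<exists>g \<in> lists S\<^sub>n. \<forall>v \<in> C. act V1 s1 m1 n g v = \<phi> v"
  using assms simplex_permutation_realizable by (elim simplicesE) auto

lemma simplices_face_of_top:
  assumes "C \<in> simplices V1 s1 m1 n k"
  shows "\<exists>D \<in> simplices V1 s1 m1 n n. C \<subseteq> D"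
proof -
  obtain c where c: "k \<le> n" "c \<in> lists S\<^sub>n" "C = vertex c ` {..k}" using assms by (rule simplicesE)
  then have "vertex c ` {..n} \<in> simplices V1 s1 m1 n n" "C \<subseteq> vertex c ` {..n}"
    unfolding simplices_def simplex_of_eq_vertices by auto
  then show ?thesis by blast
qed

end

theorem lemma6p1:
  fixes V1 :: "'a set" and s1 :: 'a and m1 :: "'a \<Rightarrow> 'a \<Rightarrow> enat" and n :: nat
  assumes "finite V1" and "s1 \<in> V1"
    and "\<forall>a\<in>V1. m1 a a = 1"
    and "\<forall>a\<in>V1. \<forall>b\<in>V1. m1 a b = m1 b a"
    and "\<forall>a\<in>V1. \<forall>b\<in>V1. a \<noteq> b \<longrightarrow> m1 a b \<ge> 2"
  shows "(\<forall>k. \<forall>C \<in> simplices V1 s1 m1 n k. \<forall>D \<in> simplices V1 s1 m1 n k.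
            \<exists>g \<in> lists (gens V1 s1 m1 (int n)). act V1 s1 m1 n g ` C = D)
       \<and> (\<forall>k. \<forall>C \<in> simplices V1 s1 m1 n k. \<forall>\<phi>. \<phi> permutes C \<longrightarrow>
            (\<exists>g \<in> lists (gens V1 s1 m1 (int n)). \<forall>v \<in> C. act V1 s1 m1 n g v = \<phi> v))
       \<and> (\<forall>k. \<forall>C \<in> simplices V1 s1 m1 n k. \<exists>D \<in> simplices V1 s1 m1 n n. C \<subseteq> D)"
  using assms(2,3)
  by (intro conjI allI ballI impI simplices_transitive simplices_permutation simplices_face_of_top)
    simp_all

end
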